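(* Suppose an SCC $F$ is mixed-Nash-A-implemented by $\mathcal M=\langle M,g\rangle$. Let $(i,\theta)\in\mathcal I\times\Theta$ and $\lambda\in MNE^{(\mathcal M,\theta)}$. If $F(\theta)\subseteq\arg\min_{z\in Z^*}u_i^\theta(z)$, $\Xi_i(\theta)\ne\emptyset$, and $Z^*\cap\mathcal L_i^Z(F(\theta),\theta)$ is an $i$-$Z^*$-max set, then $$\bigcup_{m_i\in M_i}\mathrm{SUPP}[g(m_i,\lambda_{-i})]\subseteq Z^*\cap\mathcal L_i^Z(F(\theta),\theta)\cap\Big(\bigcup_{K\in\Xi_i(\theta)}\bigcap_{\theta'\in K}F(\theta')\Big).$$
   Context: Standing setup: $\mathcal I=\{1,\dots,I\}$ finite, $I\ge 3$; $\Theta$ finite or countably infinite; $Z$ finite; $Y=\Delta(Z)$; $u_i^\theta:Z\to\mathbb R$, $U_i^\theta(y)=\sum_zy_zu_i^\theta(z)$; $\mathcal L_i^Z(\alpha,\theta)=\{z\in Z:U_i^\theta(\alpha)\ge u_i^\theta(z)\}$ and $\mathcal L_i^Z(E,\theta)=\bigcap_{z\in E}\mathcal L_i^Z(z,\theta)$. A mechanism $\mathcal M=\langle M=\times_iM_i,g:M\to Y\rangle$ has countable $M_i$; $g(\lambda)$, $g(m_i,\lambda_{-i})$ are induced lotteries; $MNE^{(\mathcal M,\theta)}$ the mixed Nash equilibria at $\theta$. $F$ is mixed-Nash-A-implemented by $\mathcal M$ if $\bigcup_{\lambda\in MNE^{(\mathcal M,\theta)}}\mathrm{SUPP}(g[\lambda])=F(\theta)$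 for all $\theta$. A nonempty $E\subseteq Z$ is an $i$-max set if for some $\theta$, $E\subseteq\arg\max_{z\in E}u_i^\theta(z)$ and $E\subseteq\arg\max_{z\in Z}u_j^\theta(z)$ for all $j\ne i$. $Z^*=\bigcup_\theta F(\theta)$ if $Z$ is an $i$-max set for some $i$, else $Z^*=Z$. A nonempty $E\subseteq Z^*$ is an $i$-$Z^*$-$\theta$-max set if $E\subseteq\arg\max_{z\in E}u_i^\theta(z)$ and $E\subseteq\arg\max_{z\in Z^*}u_j^\theta(z)$ for all $j\ne i$; $\Lambda^i(E)=\{\theta:E\text{ is an }i\text{-}Z^*\text{-}\theta\text{-max set}\}$ ($=\emptyset$ for $E=\emptyset$); $E$ is an $i$-$Z^*$-max set if $\Lambda^i(E)\ne\emptyset$. $\Theta_i^\theta=\{\theta':F(\theta)\text{ is an }i\text{-}Z^*\text{-}\theta'\text{-max set and }F(\theta)\subseteq F(\theta')\}$; $\Xi_i(\theta)=\{K\subseteq\Theta_i^\theta,K\ne\emptyset:\Theta_i^\theta\cap\Lambda^i(Z^*\cap\mathcal L_i^Z(F(\theta),\theta)\cap\bigcap_{\theta'\in K}F(\theta'))=K\}$. *)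

theory Defs
  imports "HOL-Probability.Probability"
begin

text \<open>Messages: values of type 'm,
  agent i's message space is the (countable) set M i.\<close>

definition Uexp :: "('i \<Rightarrow> 'th \<Rightarrow> 'z::finite \<Rightarrow> real) \<Rightarrow> 'i \<Rightarrow> 'th \<Rightarrow> 'z pmf \<Rightarrow> real" where
  "Uexp u i th y = (\<Sum>z\<in>UNIV. pmf y z * u i th z)"

definition argmax_on :: "('z \<Rightarrow> real) \<Rightarrow> 'z set \<Rightarrow> 'z set" where
  "argmax_on f S = {z \<in> S. \<forall>z'\<in>S. f z' \<le> f z}"

definition argmin_on :: "('z \<Rightarrow> real) \<Rightarrow> 'z set \<Rightarrow> 'z set" where
  "argmin_on f S = {z \<in> S. \<forall>z'\<in>S. f z \<le> f z'}"

definition LZ :: "('i \<Rightarrow> 'th \<Rightarrow> 'z::finite \<Rightarrow> real) \<Rightarrow> 'i \<Rightarrow> 'z pmf \<Rightarrow> 'th \<Rightarrow> 'z set" where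
  "LZ u i \<alpha> th = {z. u i th z \<le> Uexp u i th \<alpha>}"

definition LZset :: "('i \<Rightarrow> 'th \<Rightarrow> 'z::finite \<Rightarrow> real) \<Rightarrow> 'i \<Rightarrow> 'z set \<Rightarrow> 'th \<Rightarrow> 'z set" where
  "LZset u i E th = (\<Inter>z\<in>E. LZ u i (return_pmf z) th)"

definition is_i_max_set :: "('i \<Rightarrow> 'th \<Rightarrow> 'z \<Rightarrow> real) \<Rightarrow> 'i \<Rightarrow> 'z set \<Rightarrow> bool" where
  "is_i_max_set u i E \<longleftrightarrow> E \<noteq> {} \<and> (\<exists>th. E \<subseteq> argmax_on (u i th) E \<and>
      (\<forall>j. j \<noteq> i \<longrightarrow> E \<subseteq> argmax_on (u j th) UNIV))"

definition Zstar :: "('i \<Rightarrow> 'th \<Rightarrow> 'z \<Rightarrow> real) \<Rightarrow> ('th \<Rightarrow> 'z set) \<Rightarrow> 'z set" where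
  "Zstar u F = (if \<exists>i. is_i_max_set u i UNIV then (\<Union>th. F th) else UNIV)"

definition is_iZ_th_max_set :: "('i \<Rightarrow> 'th \<Rightarrow> 'z \<Rightarrow> real) \<Rightarrow> ('th \<Rightarrow> 'z set) \<Rightarrow> 'i \<Rightarrow> 'z set \<Rightarrow> 'th \<Rightarrow> bool" where
  "is_iZ_th_max_set u F i E th \<longleftrightarrow> E \<noteq> {} \<and> E \<subseteq> Zstar u F \<and>
      E \<subseteq> argmax_on (u i th) E \<and>
      (\<forall>j. j \<noteq> i \<longrightarrow> E \<subseteq> argmax_on (u j th) (Zstar u F))"

definition Lam :: "('i \<Rightarrow> 'th \<Rightarrow> 'z \<Rightarrow> real) \<Rightarrow> ('th \<Rightarrow> 'z set) \<Rightarrow> 'i \<Rightarrow> 'z set \<Rightarrow> 'th set" where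
  "Lam u F i E = {th. is_iZ_th_max_set u F i E th}"

definition is_iZ_max_set :: "('i \<Rightarrow> 'th \<Rightarrow> 'z \<Rightarrow> real) \<Rightarrow> ('th \<Rightarrow> 'z set) \<Rightarrow> 'i \<Rightarrow> 'z set \<Rightarrow> bool" where
  "is_iZ_max_set u F i E \<longleftrightarrow> Lam u F i E \<noteq> {}"

definition Theta_i :: "('i \<Rightarrow> 'th \<Rightarrow> 'z \<Rightarrow> real) \<Rightarrow> ('th \<Rightarrow> 'z set) \<Rightarrow> 'i \<Rightarrow> 'th \<Rightarrow> 'th set" where
  "Theta_i u F i th = {th'. is_iZ_th_max_set u F i (F th) th' \<and> F th \<subseteq> F th'}"

definition Xi :: "('i \<Rightarrow> 'th \<Rightarrow> 'z::finite \<Rightarrow> real) \<Rightarrow> ('th \<Rightarrow> 'z set) \<Rightarrow> 'i \<Rightarrow> 'th \<Rightarrow> 'th set set" where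
  "Xi u F i th = {K. K \<subseteq> Theta_i u F i th \<and> K \<noteq> {} \<and>
      Theta_i u F i th \<inter> Lam u F i (Zstar u F \<inter> LZset u i (F th) th \<inter> (\<Inter>th'\<in>K. F th')) = K}"

definition mixed_profile :: "('i \<Rightarrow> 'm set) \<Rightarrow> ('i \<Rightarrow> 'm pmf) \<Rightarrow> bool" where
  "mixed_profile M lam \<longleftrightarrow> (\<forall>i. set_pmf (lam i) \<subseteq> M i)"

definition induced :: "(('i::finite \<Rightarrow> 'm) \<Rightarrow> 'z pmf) \<Rightarrow> ('i \<Rightarrow> 'm pmf) \<Rightarrow> 'z pmf" where
  "induced g lam = bind_pmf (Pi_pmf UNIV undefined lam) g"

definition MNE :: "('i::finite \<Rightarrow> 'th \<Rightarrow> 'z::finite \<Rightarrow> real) \<Rightarrow> ('i \<Rightarrow> 'm set) \<Rightarrow> (('i \<Rightarrow> 'm) \<Rightarrow> 'z pmf)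
     \<Rightarrow> 'th \<Rightarrow> ('i \<Rightarrow> 'm pmf) set" where
  "MNE u M g th = {lam. mixed_profile M lam \<and>
      (\<forall>i \<mu>. set_pmf \<mu> \<subseteq> M i \<longrightarrow>
          Uexp u i th (induced g (lam(i := \<mu>))) \<le> Uexp u i th (induced g lam))}"

definition mixed_nash_A_implements ::
  "('i::finite \<Rightarrow> 'th \<Rightarrow> 'z::finite \<Rightarrow> real) \<Rightarrow> ('th \<Rightarrow> 'z set) \<Rightarrow> ('i \<Rightarrow> 'm set) \<Rightarrow> (('i \<Rightarrow> 'm) \<Rightarrow> 'z pmf) \<Rightarrow> bool" where
  "mixed_nash_A_implements u F M g \<longleftrightarrow>
     (\<forall>i. countable (M i)) \<and>
     (\<forall>th. (\<Union>lam\<in>MNE u M g th. set_pmf (induced g lam)) = F th)"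

definition is_SCC :: "('th \<Rightarrow> 'z set) \<Rightarrow> bool" where
  "is_SCC F \<longleftrightarrow> (\<forall>th. F th \<noteq> {})"

end

theory Submission
  imports Defs
begin

text \<open>Let \<open>T\<close> be the set of outcomes of pure unilateral deviations of agent \<open>i\<close> from mixed
  Nash equilibria at \<open>\<theta>\<close>; it contains \<open>F \<theta>\<close>. Since \<open>F \<theta>\<close> minimises \<open>i\<close>'s utility on \<open>Z\<^sup>*\<close>, no
  deviation can lower \<open>i\<close>'s payoff, so \<open>T\<close> lies in the same argmin and hence in
  \<open>Z\<^sup>* \<inter> L\<^sub>i(F \<theta>, \<theta>)\<close>. If \<open>\<theta>'\<close> makes some \<open>S \<supseteq> T\<close> an \<open>i\<close>-\<open>Z\<^sup>*\<close>-\<open>\<theta>'\<close>-max set, every deviation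
  profile remains an equilibrium at \<open>\<theta>'\<close> (\<open>i\<close> is indifferent on \<open>S\<close>, all others are at a maximum),
  so \<open>T \<subseteq> F \<theta>'\<close> and \<open>\<theta>' \<in> \<Theta>\<^sub>i\<^sup>\<theta>\<close>. Consequently the map defining \<open>\<Xi>\<^sub>i(\<theta>)\<close> as its set of fixed
  points is monotone on subsets of \<open>{\<theta>' \<in> \<Theta>\<^sub>i\<^sup>\<theta>. T \<subseteq> F \<theta>'}\<close> and maps them into that set. A
  Knaster--Tarski fixed point is the required element of \<open>\<Xi>\<^sub>i(\<theta>)\<close>; it is nonempty because it
  contains \<open>\<Lambda>\<^sup>i(Z\<^sup>* \<inter> L\<^sub>i(F \<theta>, \<theta>))\<close>.\<close>

lemma Uexp_le_if_support_le:
  assumes "\<And>z. z \<in> set_pmf y \<Longrightarrow> u i th z \<le> c"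
  shows "Uexp u i th (y::'z::finite pmf) \<le> c"
proof -
  have "Uexp u i th y \<le> (\<Sum>z\<in>UNIV. pmf y z * c)"
    unfolding Uexp_def
    by (rule sum_mono) (metis assms mult_left_mono pmf_nonneg set_pmf_iff mult_zero_left order_refl)
  also have "\<dots> = c" by (simp add: sum_distrib_right[symmetric] sum_pmf_eq_1)
  finally show ?thesis .
qed

lemma Uexp_ge_if_support_ge:
  assumes "\<And>z. z \<in> set_pmf y \<Longrightarrow> c \<le> u i th z"
  shows "c \<le> Uexp u i th (y::'z::finite pmf)"
proof -
  have "c = (\<Sum>z\<in>UNIV. pmf y z * c)" by (simp add: sum_distrib_right[symmetric] sum_pmf_eq_1)
  also have "\<dots> \<le> Uexp u i th y"
    unfolding Uexp_def
    by (rule sum_mono) (metis assms mult_left_mono pmf_nonneg set_pmf_iff mult_zero_left order_refl)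
  finally show ?thesis .
qed

lemma Uexp_le_imp_support_eq:
  assumes ge: "\<And>z. z \<in> set_pmf y \<Longrightarrow> c \<le> u i th z" and le: "Uexp u i th (y::'z::finite pmf) \<le> c"
    and z: "z \<in> set_pmf y"
  shows "u i th z = c"
proof -
  have nonneg: "\<forall>z\<in>UNIV. 0 \<le> pmf y z * (u i th z - c)"
    by (metis ge diff_ge_0_iff_ge mult_nonneg_nonneg mult_zero_left pmf_nonneg set_pmf_iff order_refl)
  have "Uexp u i th y - c = (\<Sum>z\<in>UNIV. pmf y z * (u i th z - c))"
    unfolding Uexp_def
    by (simp add: right_diff_distrib sum_subtractf sum_distrib_right[symmetric] sum_pmf_eq_1)
  with le nonneg have "(\<Sum>z\<in>UNIV. pmf y z * (u i th z - c)) = 0"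
    by (smt (verit) sum_nonneg)
  with nonneg have "pmf y z * (u i th z - c) = 0"
    by (simp add: sum_nonneg_eq_0_iff)
  moreover have "pmf y z > 0" using z by (simp add: pmf_positive)
  ultimately show ?thesis by simp
qed

lemma Uexp_return_pmf: "Uexp u i th (return_pmf (w::'z::finite)) = u i th w"
  by (intro order.antisym Uexp_le_if_support_le Uexp_ge_if_support_ge) auto

lemma set_pmf_induced:
  "set_pmf (induced g L) = (\<Union>f\<in>{f. \<forall>k. f k \<in> set_pmf (L k)}. set_pmf (g f))"
  unfolding induced_def by (simp add: set_Pi_pmf PiE_dflt_def)

lemma set_pmf_induced_fun_upd:
  "set_pmf (induced g (L(i := \<mu>))) = (\<Union>m\<in>set_pmf \<mu>. set_pmf (induced g (L(i := return_pmf m))))"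
  unfolding set_pmf_induced by (auto split: if_splits)

lemma mixed_profile_fun_upd:
  "mixed_profile M L \<Longrightarrow> set_pmf \<mu> \<subseteq> M j \<Longrightarrow> mixed_profile M (L(j := \<mu>))"
  unfolding mixed_profile_def by auto

lemma MNE_if_deviations_confined:
  fixes u :: "'i::finite \<Rightarrow> 'th \<Rightarrow> 'z::finite \<Rightarrow> real"
  assumes L: "mixed_profile M L"
    and dev_i: "\<And>\<mu>. set_pmf \<mu> \<subseteq> M i \<Longrightarrow> set_pmf (induced g (L(i := \<mu>))) \<subseteq> S"
    and indiff: "\<And>z. z \<in> S \<Longrightarrow> u i th z = c"
    and dev_j: "\<And>j \<mu>. j \<noteq> i \<Longrightarrow> set_pmf \<mu> \<subseteq> M j \<Longrightarrow> set_pmf (induced g (L(j := \<mu>))) \<subseteq> R"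
    and top: "\<And>j z z'. j \<noteq> i \<Longrightarrow> z \<in> S \<Longrightarrow> z' \<in> R \<Longrightarrow> u j th z' \<le> u j th z"
  shows "L \<in> MNE u M g th"
  unfolding MNE_def
proof (intro CollectI conjI allI impI L)
  have own: "set_pmf (induced g L) \<subseteq> S"
    using dev_i[of "L i"] L unfolding mixed_profile_def by simp
  fix j \<mu> assume \<mu>: "set_pmf \<mu> \<subseteq> M j"
  show "Uexp u j th (induced g (L(j := \<mu>))) \<le> Uexp u j th (induced g L)"
  proof (cases "j = i")
    case True
    have "Uexp u j th (induced g (L(j := \<mu>))) \<le> c"
      by (rule Uexp_le_if_support_le) (use dev_i \<mu> indiff True in auto)
    also have "c \<le> Uexp u j th (induced g L)"
      by (rule Uexp_ge_if_support_ge) (use own indiff True in auto)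
    finally show ?thesis .
  next
    case False
    define A where "A = u j th ` set_pmf (induced g L)"
    have A: "finite A" "A \<noteq> {}" unfolding A_def by (auto simp: set_pmf_not_empty)
    have "Uexp u j th (induced g (L(j := \<mu>))) \<le> Min A"
      by (rule Uexp_le_if_support_le)
        (use A dev_j[OF False \<mu>] top[OF False] own in \<open>auto simp: A_def Min_ge_iff\<close>)
    also have "Min A \<le> Uexp u j th (induced g L)"
      by (rule Uexp_ge_if_support_ge) (use A in \<open>auto simp: A_def\<close>)
    finally show ?thesis .
  qed
qed

text \<open>If \<open>Z\<close> is an \<open>i\<close>-max set, all agents are indifferent at the witnessing state, so every
  profile is an equilibrium there and its outcomes lie in \<open>F\<close> of that state.\<close>
lemma set_pmf_induced_subset_Zstar:
  fixes u :: "'i::finite \<Rightarrow> 'th \<Rightarrow> 'z::finite \<Rightarrow> real"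
  assumes impl: "mixed_nash_A_implements u F M g" and L: "mixed_profile M L"
  shows "set_pmf (induced g L) \<subseteq> Zstar u F"
proof (cases "\<exists>i. is_i_max_set u i UNIV")
  case False
  then show ?thesis by (simp add: Zstar_def)
next
  case True
  then obtain i0 th0 where "UNIV \<subseteq> argmax_on (u i0 th0) UNIV"
      and "\<forall>j. j \<noteq> i0 \<longrightarrow> UNIV \<subseteq> argmax_on (u j th0) UNIV"
    unfolding is_i_max_set_def by blast
  then have indiff: "u j th0 z' \<le> u j th0 z" for j z z'
    unfolding argmax_on_def by (cases "j = i0") blast+
  have "L \<in> MNE u M g th0"
    by (rule MNE_if_deviations_confined[where S = UNIV and R = UNIV and c = "u i0 th0 undefined"])
      (use L indiff in \<open>auto intro: order.antisym\<close>)
  then have "set_pmf (induced g L) \<subseteq> F th0"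
    using impl unfolding mixed_nash_A_implements_def by blast
  with True show ?thesis by (auto simp: Zstar_def)
qed

lemma is_iZ_th_max_set_subset:
  "is_iZ_th_max_set u F i E th \<Longrightarrow> E' \<subseteq> E \<Longrightarrow> E' \<noteq> {} \<Longrightarrow> is_iZ_th_max_set u F i E' th"
  unfolding is_iZ_th_max_set_def argmax_on_def by blast

lemma Lam_antimono: "S \<subseteq> S' \<Longrightarrow> S \<noteq> {} \<Longrightarrow> Lam u F i S' \<subseteq> Lam u F i S"
  unfolding Lam_def by (auto intro: is_iZ_th_max_set_subset)

lemma argmin_on_subset: "argmin_on f S \<subseteq> S"
  unfolding argmin_on_def by blast

lemma argmin_on_subset_LZset:
  "E \<subseteq> argmin_on (u i th) S \<Longrightarrow> argmin_on (u i th) S \<subseteq> LZset u i E th"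
  unfolding argmin_on_def LZset_def LZ_def Uexp_return_pmf by blast

lemma F_subset_Zstar: "F th \<subseteq> Zstar u F"
  unfolding Zstar_def by auto

definition deviation_outcomes ::
  "('i::finite \<Rightarrow> 'th \<Rightarrow> 'z::finite \<Rightarrow> real) \<Rightarrow> ('i \<Rightarrow> 'm set) \<Rightarrow> (('i \<Rightarrow> 'm) \<Rightarrow> 'z pmf) \<Rightarrow> 'i \<Rightarrow> 'th \<Rightarrow> 'z set"
  where "deviation_outcomes u M g i th =
    (\<Union>l\<in>MNE u M g th. \<Union>mi\<in>M i. set_pmf (induced g (l(i := return_pmf mi))))"

lemma set_pmf_induced_deviation_subset:
  assumes "l \<in> MNE u M g th" "set_pmf \<mu> \<subseteq> M i"
  shows "set_pmf (induced g (l(i := \<mu>))) \<subseteq> deviation_outcomes u M g i th"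
  using assms unfolding set_pmf_induced_fun_upd[of g l i \<mu>] deviation_outcomes_def by blast

lemma F_subset_deviation_outcomes:
  assumes "mixed_nash_A_implements u F M g"
  shows "F th \<subseteq> deviation_outcomes u M g i th"
proof
  fix z assume "z \<in> F th"
  then obtain l where l: "l \<in> MNE u M g th" and z: "z \<in> set_pmf (induced g l)"
    using assms unfolding mixed_nash_A_implements_def by blast
  have "set_pmf (l i) \<subseteq> M i" using l unfolding MNE_def mixed_profile_def by blast
  with l z show "z \<in> deviation_outcomes u M g i th"
    using set_pmf_induced_deviation_subset[of l u M g th "l i" i] by auto
qed

lemma deviation_outcomes_subset_argmin:
  assumes impl: "mixed_nash_A_implements u F M g"
    and Fmin: "F th \<subseteq> argmin_on (u i th) (Zstar u F)"
  shows "deviation_outcomes u M g i th \<subseteq> argmin_on (u i th) (Zstar u F)"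
proof
  fix z assume "z \<in> deviation_outcomes u M g i th"
  then obtain l mi where l: "l \<in> MNE u M g th" and mi: "mi \<in> M i"
    and z: "z \<in> set_pmf (induced g (l(i := return_pmf mi)))"
    unfolding deviation_outcomes_def by blast
  have eq_supp: "set_pmf (induced g l) \<subseteq> F th"
    using impl l unfolding mixed_nash_A_implements_def by blast
  obtain w where w: "w \<in> set_pmf (induced g l)"
    using set_pmf_not_empty[of "induced g l"] by blast
  have min: "u i th w \<le> u i th z'" if "z' \<in> Zstar u F" for z'
    using Fmin w eq_supp that unfolding argmin_on_def by blast
  have "mixed_profile M (l(i := return_pmf mi))"
    using l mi unfolding MNE_def by (intro mixed_profile_fun_upd) auto
  then have dev_Z: "set_pmf (induced g (l(i := return_pmf mi))) \<subseteq> Zstar u F"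
    using impl by (rule set_pmf_induced_subset_Zstar[rotated])
  have "u i th z' = u i th w" if "z' \<in> set_pmf (induced g l)" for z'
  proof -
    have "z' \<in> argmin_on (u i th) (Zstar u F)" "w \<in> argmin_on (u i th) (Zstar u F)"
      using Fmin eq_supp that w by blast+
    then show ?thesis unfolding argmin_on_def by force
  qed
  then have "Uexp u i th (induced g l) \<le> u i th w"
    by (intro Uexp_le_if_support_le) simp
  moreover have "Uexp u i th (induced g (l(i := return_pmf mi))) \<le> Uexp u i th (induced g l)"
    using l mi unfolding MNE_def by auto
  ultimately have "u i th z = u i th w"
    using dev_Z min z by (intro Uexp_le_imp_support_eq) auto
  with z dev_Z min show "z \<in> argmin_on (u i th) (Zstar u F)"
    unfolding argmin_on_def by auto
qed

lemma deviation_outcomes_subset_lower_contour: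
  assumes "mixed_nash_A_implements u F M g" and "F th \<subseteq> argmin_on (u i th) (Zstar u F)"
  shows "deviation_outcomes u M g i th \<subseteq> Zstar u F \<inter> LZset u i (F th) th"
  using deviation_outcomes_subset_argmin[OF assms]
    argmin_on_subset_LZset[where u = u and i = i and th = th, OF assms(2)]
    argmin_on_subset[of "u i th" "Zstar u F"]
  by blast

lemma MNE_if_Lam:
  fixes u :: "'i::finite \<Rightarrow> 'th \<Rightarrow> 'z::finite \<Rightarrow> real"
  assumes impl: "mixed_nash_A_implements u F M g"
    and t: "t \<in> Lam u F i S" and L: "mixed_profile M L"
    and dev_i: "\<And>\<mu>. set_pmf \<mu> \<subseteq> M i \<Longrightarrow> set_pmf (induced g (L(i := \<mu>))) \<subseteq> S"
  shows "L \<in> MNE u M g t"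
proof -
  have S: "S \<noteq> {}" "S \<subseteq> argmax_on (u i t) S"
    and top: "\<And>j. j \<noteq> i \<Longrightarrow> S \<subseteq> argmax_on (u j t) (Zstar u F)"
    using t unfolding Lam_def is_iZ_th_max_set_def by auto
  then obtain s where s: "s \<in> S" by blast
  show ?thesis
  proof (rule MNE_if_deviations_confined[where S = S and R = "Zstar u F" and c = "u i t s"])
    show "u i t z = u i t s" if "z \<in> S" for z
      using S s that unfolding argmax_on_def by (blast intro: order.antisym)
    show "set_pmf (induced g (L(j := \<mu>))) \<subseteq> Zstar u F" if "set_pmf \<mu> \<subseteq> M j" for j \<mu>
      using impl L that by (intro set_pmf_induced_subset_Zstar mixed_profile_fun_upd)
    show "u j t z' \<le> u j t z" if "j \<noteq> i" "z \<in> S" "z' \<in> Zstar u F" for j z z'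
      using top that unfolding argmax_on_def by blast
  qed (use L dev_i in blast)+
qed

lemma Lam_superset_deviation_outcomes:
  fixes u :: "'i::finite \<Rightarrow> 'th \<Rightarrow> 'z::finite \<Rightarrow> real"
  assumes impl: "mixed_nash_A_implements u F M g" and F_ne: "F th \<noteq> {}"
    and T: "deviation_outcomes u M g i th \<subseteq> S" and t: "t \<in> Lam u F i S"
  shows "t \<in> Theta_i u F i th" and "deviation_outcomes u M g i th \<subseteq> F t"
proof -
  have "l(i := return_pmf mi) \<in> MNE u M g t" if l: "l \<in> MNE u M g th" and mi: "mi \<in> M i" for l mi
  proof (rule MNE_if_Lam[OF impl t])
    show "mixed_profile M (l(i := return_pmf mi))"
      using l mi by (intro mixed_profile_fun_upd) (auto simp: MNE_def)
    show "set_pmf (induced g ((l(i := return_pmf mi))(i := \<mu>))) \<subseteq> S" if "set_pmf \<mu> \<subseteq> M i" for \<mu>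
      using set_pmf_induced_deviation_subset[OF l that] T by simp
  qed
  then show T_F: "deviation_outcomes u M g i th \<subseteq> F t"
    using impl unfolding deviation_outcomes_def mixed_nash_A_implements_def by blast
  have "F th \<subseteq> S" using F_subset_deviation_outcomes[OF impl] T by blast
  then have "is_iZ_th_max_set u F i (F th) t"
    using t F_ne unfolding Lam_def by (blast intro: is_iZ_th_max_set_subset)
  then show "t \<in> Theta_i u F i th"
    using F_subset_deviation_outcomes[OF impl] T_F unfolding Theta_i_def by blast
qed

lemma fixpoint_below:
  fixes f :: "'a::complete_lattice \<Rightarrow> 'a"
  assumes mono: "\<And>x y. x \<le> y \<Longrightarrow> y \<le> a \<Longrightarrow> f x \<le> f y"
    and bound: "\<And>x. x \<le> a \<Longrightarrow> f x \<le> a"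
  obtains x where "x \<le> a" "f x = x" "f bot \<le> x"
proof -
  define h where "h x = f (inf x a)" for x
  have "mono h"
    unfolding h_def by (rule monoI) (metis inf_le2 inf_mono mono order_refl)
  define x where "x = lfp h"
  have x: "h x = x" unfolding x_def using lfp_unfold[OF \<open>mono h\<close>] by simp
  then have "x \<le> a" unfolding h_def by (metis bound inf_le2)
  then have "f x = x" using x by (simp add: h_def inf_absorb1)
  moreover have "f bot \<le> f x" using mono[OF bot_least \<open>x \<le> a\<close>] .
  ultimately show ?thesis using that \<open>x \<le> a\<close> by simp
qed

lemma Xi_member_containing_deviation_outcomes:
  fixes u :: "'i::finite \<Rightarrow> 'th \<Rightarrow> 'z::finite \<Rightarrow> real"
  assumes impl: "mixed_nash_A_implements u F M g" and F_ne: "F th \<noteq> {}"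
    and Fmin: "F th \<subseteq> argmin_on (u i th) (Zstar u F)"
    and Lam_E: "is_iZ_max_set u F i (Zstar u F \<inter> LZset u i (F th) th)"
  obtains K where "K \<in> Xi u F i th" and "deviation_outcomes u M g i th \<subseteq> (\<Inter>th'\<in>K. F th')"
proof -
  define T where "T = deviation_outcomes u M g i th"
  define E where "E = Zstar u F \<inter> LZset u i (F th) th"
  define \<Theta> where "\<Theta> = Theta_i u F i th"
  define G where "G = {t. T \<subseteq> F t}"
  define \<phi> where "\<phi> K = \<Theta> \<inter> Lam u F i (E \<inter> (\<Inter>th'\<in>K. F th'))" for K
  have TE: "T \<subseteq> E"
    unfolding T_def E_def by (rule deviation_outcomes_subset_lower_contour[OF impl Fmin])
  have T: "T \<noteq> {}" using F_ne F_subset_deviation_outcomes[OF impl] unfolding T_def by blast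
  have Lam_T: "t \<in> \<Theta> \<inter> G" if "T \<subseteq> S" "t \<in> Lam u F i S" for S t
    using Lam_superset_deviation_outcomes[OF impl F_ne] that unfolding T_def \<Theta>_def G_def by blast
  have T_sub: "T \<subseteq> E \<inter> (\<Inter>th'\<in>K. F th')" if "K \<subseteq> G" for K
    using that TE unfolding G_def by auto
  obtain K where K: "K \<subseteq> \<Theta> \<inter> G" "\<phi> K = K" "\<phi> {} \<subseteq> K"
  proof (rule fixpoint_below[where f = \<phi> and a = "\<Theta> \<inter> G"])
    show "\<phi> K \<subseteq> \<phi> K'" if "K \<subseteq> K'" "K' \<subseteq> \<Theta> \<inter> G" for K K'
    proof -
      have "E \<inter> (\<Inter>th'\<in>K'. F th') \<subseteq> E \<inter> (\<Inter>th'\<in>K. F th')" using that(1) by blast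
      moreover have "E \<inter> (\<Inter>th'\<in>K'. F th') \<noteq> {}" using T T_sub that(2) by blast
      ultimately have "Lam u F i (E \<inter> (\<Inter>th'\<in>K. F th')) \<subseteq> Lam u F i (E \<inter> (\<Inter>th'\<in>K'. F th'))"
        by (rule Lam_antimono)
      then show ?thesis unfolding \<phi>_def by blast
    qed
    show "\<phi> K \<subseteq> \<Theta> \<inter> G" if "K \<subseteq> \<Theta> \<inter> G" for K
    proof -
      have "T \<subseteq> E \<inter> (\<Inter>th'\<in>K. F th')" using that by (intro T_sub) blast
      with Lam_T show ?thesis unfolding \<phi>_def by blast
    qed
  qed (simp add: bot_set_def)
  have "Lam u F i E \<subseteq> \<phi> {}" using Lam_T[OF TE] unfolding \<phi>_def by auto
  with K Lam_E have "K \<noteq> {}" unfolding is_iZ_max_set_def E_def by blast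
  moreover have "\<Theta> \<inter> Lam u F i (Zstar u F \<inter> LZset u i (F th) th \<inter> (\<Inter>th'\<in>K. F th')) = K"
    using K(2) unfolding \<phi>_def E_def by (simp only: Int_assoc)
  ultimately have "K \<in> Xi u F i th"
    using K(1) unfolding Xi_def \<Theta>_def by blast
  moreover have "T \<subseteq> (\<Inter>th'\<in>K. F th')" using K(1) unfolding G_def by blast
  ultimately show ?thesis using that unfolding T_def by blast
qed

theorem lemma7:
  fixes u :: "'i::finite \<Rightarrow> 'th::countable \<Rightarrow> 'z::finite \<Rightarrow> real"
    and F :: "'th \<Rightarrow> 'z set"
    and M :: "'i \<Rightarrow> 'm set"
    and g :: "('i \<Rightarrow> 'm) \<Rightarrow> 'z pmf"
    and i :: 'i and th :: 'th and lam :: "'i \<Rightarrow> 'm pmf"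
  assumes "CARD('i) \<ge> 3"
    and "is_SCC F"
    and "mixed_nash_A_implements u F M g"
    and "lam \<in> MNE u M g th"
    and "F th \<subseteq> argmin_on (u i th) (Zstar u F)"
    and "Xi u F i th \<noteq> {}"
    and "is_iZ_max_set u F i (Zstar u F \<inter> LZset u i (F th) th)"
  shows "(\<Union>mi\<in>M i. set_pmf (induced g (lam(i := return_pmf mi))))
           \<subseteq> Zstar u F \<inter> LZset u i (F th) th \<inter> (\<Union>K\<in>Xi u F i th. \<Inter>th'\<in>K. F th')"
proof -
  have F_ne: "F th \<noteq> {}" using assms(2) unfolding is_SCC_def by blast
  obtain K where K: "K \<in> Xi u F i th" "deviation_outcomes u M g i th \<subseteq> (\<Inter>th'\<in>K. F th')"
    using Xi_member_containing_deviation_outcomes[OF assms(3) F_ne assms(5) assms(7)] .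
  have dev: "(\<Union>mi\<in>M i. set_pmf (induced g (lam(i := return_pmf mi)))) \<subseteq> deviation_outcomes u M g i th"
    using assms(4) unfolding deviation_outcomes_def by blast
  with deviation_outcomes_subset_lower_contour[OF assms(3,5)] K show ?thesis by blast
qed

end
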